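(* Let $G=(V_G,E_G)$ be a graph with $N$ vertices such that $\frac{\mathcal{E}(N)}{N}\ge\frac{\mathcal{E}(n)}{n}$ for all $0<n<N$, let $g\ge0$ and $H$ the transverse-field Ising Hamiltonian on $G$. Then $\min_{0\le n<N}\frac{\mathcal{E}(N)-\mathcal{E}(n)}{N-n}=\frac{\mathcal{E}(N)}{N}$, and $$\min_{|\varphi\rangle\text{ stabilizer state}}\langle\varphi|H|\varphi\rangle=\begin{cases}-\mathcal{E}(N)&\text{if } g\le \mathcal{E}(N)/N,\\ -gN&\text{if } g\ge \mathcal{E}(N)/N.\end{cases}$$
   Context: A graph $G=(V_G,E_G)$ is finite, simple and undirected, with $V_G=\{q_0,\dots,q_{N-1}\}$, vertex $q_i$ corresponding to qubit $i$. For $S\subseteq V_G$, $E(S)$ is the set of edges with both endpoints in $S$. The edge-function is $\mathcal{E}(n)=\max\{|E(S)|: S\subseteq V_G,\ |S|\le n\}$ (so $\mathcal{E}(N)=|E_G|$). The transverse-field Ising Hamiltonian on $G$ is $H=-\sum_{\langle q_i,q_j\rangle\in E_G}Z_iZ_j-g\sum_{q_i\in V_G}X_i$; stabilizer states are $N$-qubit states whose stabilizer group consists of $2^N$ Pauli-group elements. *)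

theory Defs
  imports "Jordan_Normal_Form.Matrix"
begin

text \<open>Graphs: vertex set {0..<N} (vertex q_i = qubit i); edges are 2-element subsets.\<close>
definition simple_graph :: "nat \<Rightarrow> nat set set \<Rightarrow> bool" where
  "simple_graph N E \<longleftrightarrow> (\<forall>e\<in>E. e \<subseteq> {0..<N} \<and> card e = 2)"

definition edges_in :: "nat set set \<Rightarrow> nat set \<Rightarrow> nat set set" where
  "edges_in E S = {e \<in> E. e \<subseteq> S}"

definition edge_fun :: "nat \<Rightarrow> nat set set \<Rightarrow> nat \<Rightarrow> nat" where
  "edge_fun N E n = Max {card (edges_in E S) | S. S \<subseteq> {0..<N} \<and> card S \<le> n}"

datatype pauli1 = PI | PX | PY | PZ

fun pauli1_entry :: "pauli1 \<Rightarrow> nat \<Rightarrow> nat \<Rightarrow> complex" where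
  "pauli1_entry PI r c = (if r = c then 1 else 0)"
| "pauli1_entry PX r c = (if r \<noteq> c then 1 else 0)"
| "pauli1_entry PY r c = (if r = c then 0 else if r = 0 then - \<i> else \<i>)"
| "pauli1_entry PZ r c = (if r = c then (if r = 0 then 1 else -1) else 0)"

definition qbit :: "nat \<Rightarrow> nat \<Rightarrow> nat" where
  "qbit k i = k div 2 ^ i mod 2"

text \<open>Tensor product P_0 \<otimes> ... \<otimes> P_{N-1}, written out entrywise.\<close>
definition pauli_string :: "nat \<Rightarrow> (nat \<Rightarrow> pauli1) \<Rightarrow> complex mat" where
  "pauli_string N p = mat (2^N) (2^N)
     (\<lambda>(r, c). \<Prod>i<N. pauli1_entry (p i) (qbit r i) (qbit c i))"

definition pauli_group :: "nat \<Rightarrow> complex mat set" where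
  "pauli_group N = {c \<cdot>\<^sub>m pauli_string N p | c p. c \<in> {1, -1, \<i>, -\<i>}}"

definition stab_group :: "nat \<Rightarrow> complex vec \<Rightarrow> complex mat set" where
  "stab_group N \<phi> = {P \<in> pauli_group N. P *\<^sub>v \<phi> = \<phi>}"

definition is_state :: "nat \<Rightarrow> complex vec \<Rightarrow> bool" where
  "is_state N \<phi> \<longleftrightarrow> \<phi> \<in> carrier_vec (2^N) \<and> \<phi> \<bullet>c \<phi> = 1"

definition stabilizer_state :: "nat \<Rightarrow> complex vec \<Rightarrow> bool" where
  "stabilizer_state N \<phi> \<longleftrightarrow> is_state N \<phi> \<and> card (stab_group N \<phi>) = 2 ^ N"

definition pauli_on :: "nat \<Rightarrow> nat set \<Rightarrow> pauli1 \<Rightarrow> complex mat" where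
  "pauli_on N A P = pauli_string N (\<lambda>k. if k \<in> A then P else PI)"

definition ising_H :: "nat \<Rightarrow> nat set set \<Rightarrow> real \<Rightarrow> complex mat" where
  "ising_H N E g = mat (2^N) (2^N)
     (\<lambda>rc. - (\<Sum>e\<in>E. pauli_on N e PZ $$ rc)
           - complex_of_real g * (\<Sum>i<N. pauli_on N {i} PX $$ rc))"

definition expect :: "complex mat \<Rightarrow> complex vec \<Rightarrow> complex" where
  "expect H \<phi> = (H *\<^sub>v \<phi>) \<bullet>c \<phi>"

end

theory Submission
  imports Defs "HOL-Library.FuncSet"
begin

text \<open>
  The 4^N Pauli strings are orthogonal in the Hilbert-Schmidt inner product, which gives the
  sum rule: the squared moduli of the Pauli expectations of a state add up to 2^N. A stabilizer
  state saturates it with the 2^N Pauli strings it stabilizes up to a phase, so every other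
  Pauli expectation vanishes, and each one lies in {0, 1, -1}. If the expectation of X_i is
  nonzero, the state is an eigenvector of X_i, which anticommutes with Z_i Z_j, forcing the
  expectation of Z_i Z_j to vanish. Hence, with A the set of the k sites where X_i has nonzero
  expectation, only edges avoiding A contribute, and the energy is at least -E(N - k) - g k.
  The density hypothesis bounds this from below by the energy -E(N) of |0...0> or the energy
  -g N of |+...+>, both of which are stabilizer states.
\<close>

lemma qbit_less_2: "qbit k i < 2"
  by (simp add: qbit_def)

lemma qbit_0: "qbit k 0 = k mod 2"
  by (simp add: qbit_def)

lemma qbit_Suc: "qbit k (Suc i) = qbit (k div 2) i"
  by (simp add: qbit_def div_mult2_eq)

lemma qbit_of_0 [simp]: "qbit 0 i = 0"
  by (simp add: qbit_def)

lemma eq_if_qbits_eq: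
  assumes "r < 2^N" "c < 2^N" "\<forall>i<N. qbit r i = qbit c i"
  shows "r = c"
  using assms
proof (induction N arbitrary: r c)
  case 0
  then show ?case by simp
next
  case (Suc N)
  have "r div 2 = c div 2"
    using Suc.prems qbit_Suc by (intro Suc.IH) auto
  moreover have "r mod 2 = c mod 2"
    using Suc.prems(3) qbit_0 by (metis zero_less_Suc)
  ultimately show ?case by (metis div_mult_mod_eq)
qed

lemma sum_atLeastLessThan_double:
  fixes g :: "nat \<Rightarrow> 'a::comm_monoid_add"
  shows "(\<Sum>c\<in>{0..<2*M}. g c) = (\<Sum>c\<in>{0..<M}. g (2*c) + g (2*c+1))"
proof (induction M)
  case 0
  then show ?case by simp
next
  case (Suc M)
  have "{0..<2 * Suc M} = insert (2*M+1) (insert (2*M) {0..<2*M})" by auto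
  then show ?case using Suc by (simp add: add_ac)
qed

lemma sum_prod_qbits:
  fixes f :: "nat \<Rightarrow> nat \<Rightarrow> 'a::comm_semiring_1"
  shows "(\<Sum>c\<in>{0..<2^N}. \<Prod>i<N. f i (qbit c i)) = (\<Prod>i<N. f i 0 + f i 1)"
proof (induction N arbitrary: f)
  case 0
  then show ?case by simp
next
  case (Suc N)
  have split: "(\<Prod>i<Suc N. f i (qbit c i))
      = f 0 (c mod 2) * (\<Prod>i<N. f (Suc i) (qbit (c div 2) i))" for c
    by (simp only: prod.lessThan_Suc_shift qbit_0 qbit_Suc)
  have "(\<Sum>c\<in>{0..<2^Suc N}. \<Prod>i<Suc N. f i (qbit c i))
      = (\<Sum>c\<in>{0..<2^N}. f 0 0 * (\<Prod>i<N. f (Suc i) (qbit c i))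
                          + f 0 1 * (\<Prod>i<N. f (Suc i) (qbit c i)))"
    unfolding split by (simp add: sum_atLeastLessThan_double)
  also have "\<dots> = (f 0 0 + f 0 1) * (\<Sum>c\<in>{0..<2^N}. \<Prod>i<N. f (Suc i) (qbit c i))"
    by (simp add: sum.distrib sum_distrib_left distrib_right)
  also have "\<dots> = (\<Prod>i<Suc N. f i 0 + f i 1)"
    using Suc.IH[of "\<lambda>i. f (Suc i)"] by (simp only: prod.lessThan_Suc_shift)
  finally show ?case .
qed

lemma sum_sum_prod_qbits:
  fixes f :: "nat \<Rightarrow> nat \<Rightarrow> nat \<Rightarrow> 'a::comm_semiring_1"
  shows "(\<Sum>r\<in>{0..<2^N}. \<Sum>c\<in>{0..<2^N}. \<Prod>i<N. f i (qbit r i) (qbit c i))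
     = (\<Prod>i<N. f i 0 0 + f i 0 1 + (f i 1 0 + f i 1 1))"
  by (simp only: sum_prod_qbits[of "\<lambda>i b. f i (qbit _ i) b"]
      sum_prod_qbits[of "\<lambda>i a. f i a 0 + f i a 1"])

lemma UNIV_pauli1: "(UNIV :: pauli1 set) = {PI, PX, PY, PZ}"
  using pauli1.exhaust by auto

lemma finite_UNIV_pauli1 [simp]: "finite (UNIV :: pauli1 set)"
  by (simp add: UNIV_pauli1)

text \<open>The multiplication table P Q = pauli1_phase P Q \<cdot> pauli1_mult P Q, e.g. X Y = i Z.\<close>

fun pauli1_phase :: "pauli1 \<Rightarrow> pauli1 \<Rightarrow> complex" where
  "pauli1_phase PX PY = \<i>" | "pauli1_phase PY PX = - \<i>"
| "pauli1_phase PY PZ = \<i>" | "pauli1_phase PZ PY = - \<i>"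
| "pauli1_phase PZ PX = \<i>" | "pauli1_phase PX PZ = - \<i>"
| "pauli1_phase _ _ = 1"

fun pauli1_mult :: "pauli1 \<Rightarrow> pauli1 \<Rightarrow> pauli1" where
  "pauli1_mult PI Q = Q" | "pauli1_mult P PI = P"
| "pauli1_mult PX PX = PI" | "pauli1_mult PY PY = PI" | "pauli1_mult PZ PZ = PI"
| "pauli1_mult PX PY = PZ" | "pauli1_mult PY PX = PZ"
| "pauli1_mult PY PZ = PX" | "pauli1_mult PZ PY = PX"
| "pauli1_mult PZ PX = PY" | "pauli1_mult PX PZ = PY"

lemma pauli1_entry_mult:
  assumes "a < 2" "c < 2"
  shows "pauli1_entry P a 0 * pauli1_entry Q 0 c + pauli1_entry P a 1 * pauli1_entry Q 1 c
       = pauli1_phase P Q * pauli1_entry (pauli1_mult P Q) a c"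
  using less_2_cases[OF assms(1)] less_2_cases[OF assms(2)]
  by (cases P; cases Q; auto)

lemma cnj_pauli1_entry: "a < 2 \<Longrightarrow> b < 2 \<Longrightarrow> cnj (pauli1_entry P a b) = pauli1_entry P b a"
  by (cases P) auto

lemma sum_pauli1_entry_cnj:
  assumes "a < 2" "b < 2" "a' < 2" "b' < 2"
  shows "(\<Sum>P\<in>UNIV. pauli1_entry P a b * cnj (pauli1_entry P a' b'))
       = (if a = a' \<and> b = b' then 2 else 0)"
  unfolding UNIV_pauli1
  using less_2_cases[OF assms(1)] less_2_cases[OF assms(2)]
    less_2_cases[OF assms(3)] less_2_cases[OF assms(4)]
  by (auto simp: complex_eq_iff)

lemma pauli1_hilbert_schmidt:
  "cnj (pauli1_entry P 0 0) * pauli1_entry Q 0 0 + cnj (pauli1_entry P 0 1) * pauli1_entry Q 0 1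
   + (cnj (pauli1_entry P 1 0) * pauli1_entry Q 1 0 + cnj (pauli1_entry P 1 1) * pauli1_entry Q 1 1)
   = (if P = Q then 2 else 0)"
  by (cases P; cases Q) (auto simp: complex_eq_iff)

abbreviation pauli_labels :: "nat \<Rightarrow> (nat \<Rightarrow> pauli1) set" where
  "pauli_labels N \<equiv> {..<N} \<rightarrow>\<^sub>E (UNIV :: pauli1 set)"

lemma finite_pauli_labels [simp]: "finite (pauli_labels N)"
  by (rule finite_PiE) auto

lemma pauli_string_carrier [simp]: "pauli_string N p \<in> carrier_mat (2^N) (2^N)"
  by (simp add: pauli_string_def)

lemma pauli_string_dim [simp]:
  "dim_row (pauli_string N p) = 2^N" "dim_col (pauli_string N p) = 2^N"
  by (simp_all add: pauli_string_def)

lemma pauli_string_index: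
  "r < 2^N \<Longrightarrow> c < 2^N \<Longrightarrow>
   pauli_string N p $$ (r, c) = (\<Prod>i<N. pauli1_entry (p i) (qbit r i) (qbit c i))"
  by (simp add: pauli_string_def)

lemma pauli_string_restrict: "pauli_string N (restrict p {..<N}) = pauli_string N p"
  unfolding pauli_string_def by (intro cong_mat refl) (auto intro!: prod.cong)

lemma pauli_string_mult:
  "pauli_string N p * pauli_string N q
   = (\<Prod>i<N. pauli1_phase (p i) (q i)) \<cdot>\<^sub>m pauli_string N (\<lambda>i. pauli1_mult (p i) (q i))"
proof (rule eq_matI)
  fix r c assume "r < dim_row ((\<Prod>i<N. pauli1_phase (p i) (q i)) \<cdot>\<^sub>m pauli_string N (\<lambda>i. pauli1_mult (p i) (q i)))"
    and "c < dim_col ((\<Prod>i<N. pauli1_phase (p i) (q i)) \<cdot>\<^sub>m pauli_string N (\<lambda>i. pauli1_mult (p i) (q i)))"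
  then have r: "r < 2^N" and c: "c < 2^N" by auto
  have "(pauli_string N p * pauli_string N q) $$ (r, c)
      = (\<Sum>k\<in>{0..<2^N}. \<Prod>i<N. pauli1_entry (p i) (qbit r i) (qbit k i)
                                 * pauli1_entry (q i) (qbit k i) (qbit c i))"
    using r c by (simp add: scalar_prod_def pauli_string_index prod.distrib)
  also have "\<dots> = (\<Prod>i<N. pauli1_entry (p i) (qbit r i) 0 * pauli1_entry (q i) 0 (qbit c i)
                          + pauli1_entry (p i) (qbit r i) 1 * pauli1_entry (q i) 1 (qbit c i))"
    by (rule sum_prod_qbits)
  also have "\<dots> = (\<Prod>i<N. pauli1_phase (p i) (q i) * pauli1_entry (pauli1_mult (p i) (q i)) (qbit r i) (qbit c i))"
    by (intro prod.cong refl pauli1_entry_mult qbit_less_2)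
  finally show "(pauli_string N p * pauli_string N q) $$ (r, c)
      = ((\<Prod>i<N. pauli1_phase (p i) (q i)) \<cdot>\<^sub>m pauli_string N (\<lambda>i. pauli1_mult (p i) (q i))) $$ (r, c)"
    using r c by (simp add: pauli_string_index prod.distrib)
qed auto

lemma cnj_pauli_string_index:
  "r < 2^N \<Longrightarrow> c < 2^N \<Longrightarrow> cnj (pauli_string N p $$ (r, c)) = pauli_string N p $$ (c, r)"
  by (simp add: pauli_string_index cnj_pauli1_entry qbit_less_2)

lemma sum_pauli_string_index_cnj:
  assumes "r < 2^N" "c < 2^N" "r' < 2^N" "c' < 2^N"
  shows "(\<Sum>p\<in>pauli_labels N. pauli_string N p $$ (r, c) * cnj (pauli_string N p $$ (r', c')))
       = (if r = r' \<and> c = c' then 2^N else 0)"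
proof -
  have "(\<Sum>p\<in>pauli_labels N. pauli_string N p $$ (r, c) * cnj (pauli_string N p $$ (r', c')))
      = (\<Prod>i<N. \<Sum>P\<in>UNIV. pauli1_entry P (qbit r i) (qbit c i) * cnj (pauli1_entry P (qbit r' i) (qbit c' i)))"
    using assms by (simp add: pauli_string_index prod.distrib prod_sum_PiE)
  also have "\<dots> = (\<Prod>i<N. if qbit r i = qbit r' i \<and> qbit c i = qbit c' i then 2 else 0)"
    by (intro prod.cong refl sum_pauli1_entry_cnj qbit_less_2)
  also have "\<dots> = (if r = r' \<and> c = c' then 2^N else 0)"
  proof (cases "r = r' \<and> c = c'")
    case False
    then obtain i where "i < N" "\<not> (qbit r i = qbit r' i \<and> qbit c i = qbit c' i)"
      using eq_if_qbits_eq assms by blast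
    then show ?thesis using False by (intro trans[OF prod_zero]) auto
  qed simp
  finally show ?thesis .
qed

lemma sum_cnj_pauli_string_index_mult:
  "(\<Sum>r\<in>{0..<2^N}. \<Sum>c\<in>{0..<2^N}. cnj (pauli_string N p $$ (r, c)) * pauli_string N q $$ (r, c))
   = (\<Prod>i<N. if p i = q i then 2 else 0)"
proof -
  have "(\<Sum>r\<in>{0..<2^N}. \<Sum>c\<in>{0..<2^N}. cnj (pauli_string N p $$ (r, c)) * pauli_string N q $$ (r, c))
     = (\<Sum>r\<in>{0..<2^N}. \<Sum>c\<in>{0..<2^N}. \<Prod>i<N.
          cnj (pauli1_entry (p i) (qbit r i) (qbit c i)) * pauli1_entry (q i) (qbit r i) (qbit c i))"
    by (intro sum.cong refl) (simp add: pauli_string_index prod.distrib)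
  also have "\<dots> = (\<Prod>i<N. if p i = q i then 2 else 0)"
    by (simp only: pauli1_hilbert_schmidt
        sum_sum_prod_qbits[of "\<lambda>i a b. cnj (pauli1_entry (p i) a b) * pauli1_entry (q i) a b"])
  finally show ?thesis .
qed

lemma inj_on_pauli_string: "inj_on (pauli_string N) (pauli_labels N)"
proof
  fix p q assume p: "p \<in> pauli_labels N" and q: "q \<in> pauli_labels N"
    and eq: "pauli_string N p = pauli_string N q"
  have "(\<Prod>i<N. if p i = q i then 2 else (0::complex)) = (\<Prod>i<N. if p i = p i then 2 else 0)"
    using sum_cnj_pauli_string_index_mult[of N p q] sum_cnj_pauli_string_index_mult[of N p p] eq
    by simp
  then have "(\<Prod>i<N. if p i = q i then 2 else (0::complex)) \<noteq> 0" by simp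
  then have "\<forall>i<N. p i = q i" by (auto simp: prod_zero_iff split: if_splits)
  then show "p = q" using p q by (intro PiE_ext[OF p q]) auto
qed

lemma pauli_string_in_pauli_group: "pauli_string N p \<in> pauli_group N"
proof -
  have "pauli_string N p = 1 \<cdot>\<^sub>m pauli_string N p" by (rule eq_matI) auto
  then show ?thesis unfolding pauli_group_def by blast
qed

lemma cscalar_prod_sum:
  "v \<in> carrier_vec n \<Longrightarrow> w \<in> carrier_vec n \<Longrightarrow> v \<bullet>c w = (\<Sum>r\<in>{0..<n}. v $ r * cnj (w $ r))"
  by (simp add: scalar_prod_def)

lemma cscalar_prod_smult_left:
  "v \<in> carrier_vec n \<Longrightarrow> w \<in> carrier_vec n \<Longrightarrow> (a \<cdot>\<^sub>v v) \<bullet>c w = a * (v \<bullet>c w)"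
  by (simp add: cscalar_prod_sum[of _ n] sum_distrib_left mult.assoc)

lemma cscalar_prod_smult_right:
  "v \<in> carrier_vec n \<Longrightarrow> w \<in> carrier_vec n \<Longrightarrow> v \<bullet>c (a \<cdot>\<^sub>v w) = cnj a * (v \<bullet>c w)"
  by (simp add: cscalar_prod_sum[of _ n] sum_distrib_left mult_ac)

lemma smult_mat_mult_vec:
  "A \<in> carrier_mat n n \<Longrightarrow> v \<in> carrier_vec n \<Longrightarrow> (c \<cdot>\<^sub>m A) *\<^sub>v v = c \<cdot>\<^sub>v (A *\<^sub>v v)"
  by (rule eq_vecI) (auto simp: scalar_prod_def sum_distrib_left mult_ac)

lemma mult_mat_vec_index_sum:
  "A \<in> carrier_mat n n \<Longrightarrow> v \<in> carrier_vec n \<Longrightarrow> r < n \<Longrightarrow>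
   (A *\<^sub>v v) $ r = (\<Sum>c\<in>{0..<n}. A $$ (r, c) * v $ c)"
  by (simp add: scalar_prod_def row_def)

lemma expect_double_sum:
  "A \<in> carrier_mat n n \<Longrightarrow> \<phi> \<in> carrier_vec n \<Longrightarrow>
   expect A \<phi> = (\<Sum>r\<in>{0..<n}. \<Sum>c\<in>{0..<n}. A $$ (r, c) * (\<phi> $ c * cnj (\<phi> $ r)))"
  unfolding expect_def
  by (subst cscalar_prod_sum[of _ n]) (auto simp: scalar_prod_def sum_distrib_right mult.assoc intro!: sum.cong)

lemma expect_eigenvector:
  assumes "is_state N \<phi>" "A \<in> carrier_mat (2^N) (2^N)" "A *\<^sub>v \<phi> = l \<cdot>\<^sub>v \<phi>"
  shows "expect A \<phi> = l"
  using assms unfolding expect_def is_state_def by (simp add: cscalar_prod_smult_left[of _ "2^N"])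

lemma hermitian_cscalar_prod_swap:
  assumes A: "A \<in> carrier_mat n n"
    and herm: "\<And>r c. r < n \<Longrightarrow> c < n \<Longrightarrow> cnj (A $$ (r, c)) = A $$ (c, r)"
    and v: "v \<in> carrier_vec n" and w: "w \<in> carrier_vec n"
  shows "(A *\<^sub>v v) \<bullet>c w = v \<bullet>c (A *\<^sub>v w)"
proof -
  have "(A *\<^sub>v v) \<bullet>c w = (\<Sum>r\<in>{0..<n}. \<Sum>c\<in>{0..<n}. A $$ (r, c) * v $ c * cnj (w $ r))"
    using A v w by (subst cscalar_prod_sum[of _ n])
      (auto simp: scalar_prod_def sum_distrib_right intro!: sum.cong)
  also have "\<dots> = (\<Sum>c\<in>{0..<n}. \<Sum>r\<in>{0..<n}. A $$ (r, c) * v $ c * cnj (w $ r))"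
    by (rule sum.swap)
  also have "\<dots> = v \<bullet>c (A *\<^sub>v w)"
    using A v w herm by (subst cscalar_prod_sum[of _ n])
      (auto simp: scalar_prod_def sum_distrib_left mult_ac intro!: sum.cong)
  finally show ?thesis .
qed

lemma pauli_string_cscalar_prod_swap:
  "v \<in> carrier_vec (2^N) \<Longrightarrow> w \<in> carrier_vec (2^N) \<Longrightarrow>
   (pauli_string N p *\<^sub>v v) \<bullet>c w = v \<bullet>c (pauli_string N p *\<^sub>v w)"
  by (rule hermitian_cscalar_prod_swap[OF pauli_string_carrier]) (simp_all add: cnj_pauli_string_index)

lemma pauli_string_eigenvalue_real:
  assumes st: "is_state N \<phi>" and ev: "pauli_string N p *\<^sub>v \<phi> = l \<cdot>\<^sub>v \<phi>"
  shows "cnj l = l"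
proof -
  have \<phi>: "\<phi> \<in> carrier_vec (2^N)" and norm: "\<phi> \<bullet>c \<phi> = 1"
    using st unfolding is_state_def by blast+
  have "l = (pauli_string N p *\<^sub>v \<phi>) \<bullet>c \<phi>"
    using \<phi> norm by (simp add: ev cscalar_prod_smult_left[of _ "2^N"])
  also have "\<dots> = \<phi> \<bullet>c (pauli_string N p *\<^sub>v \<phi>)"
    by (rule pauli_string_cscalar_prod_swap[OF \<phi> \<phi>])
  also have "\<dots> = cnj l"
    using \<phi> norm by (simp add: ev cscalar_prod_smult_right[of _ "2^N"])
  finally show ?thesis by simp
qed

section \<open>The sum rule for Pauli expectations\<close>

lemma sum_sum_delta:
  fixes X :: "nat \<Rightarrow> nat \<Rightarrow> complex"
  assumes "r < n" "c < n"
  shows "(\<Sum>r'\<in>{0..<n}. \<Sum>c'\<in>{0..<n}. (if r = r' \<and> c = c' then K else 0) * X r' c') = K * X r c"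
proof -
  have "(\<Sum>c'\<in>{0..<n}. (if r = r' \<and> c = c' then K else 0) * X r' c')
      = (\<Sum>c'\<in>{0..<n}. if c = c' then (if r = r' then K * X r' c' else 0) else 0)" for r'
    by (intro sum.cong refl) auto
  then show ?thesis using assms by simp
qed

lemma sum_product_4:
  fixes f g :: "nat \<Rightarrow> nat \<Rightarrow> 'a::comm_semiring_0"
  shows "(\<Sum>r\<in>A. \<Sum>c\<in>B. f r c) * (\<Sum>r'\<in>A. \<Sum>c'\<in>B. g r' c')
     = (\<Sum>r\<in>A. \<Sum>c\<in>B. \<Sum>r'\<in>A. \<Sum>c'\<in>B. f r c * g r' c')"
  by (simp only: sum_distrib_right) (simp only: sum_distrib_left)

lemma sum_expect_pauli_string_cnj:
  assumes \<phi>: "\<phi> \<in> carrier_vec (2^N)"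
  shows "(\<Sum>p\<in>pauli_labels N. expect (pauli_string N p) \<phi> * cnj (expect (pauli_string N p) \<phi>))
       = 2^N * (\<phi> \<bullet>c \<phi>)^2"
proof -
  let ?n = "(2::nat)^N" and ?P = "pauli_string N"
  define w where "w r c = \<phi> $ c * cnj (\<phi> $ r)" for r c
  have e: "expect (?P p) \<phi> = (\<Sum>r\<in>{0..<?n}. \<Sum>c\<in>{0..<?n}. ?P p $$ (r, c) * w r c)" for p
    unfolding w_def using \<phi> by (simp add: expect_double_sum[of _ ?n])
  have "(\<Sum>p\<in>pauli_labels N. expect (?P p) \<phi> * cnj (expect (?P p) \<phi>))
      = (\<Sum>p\<in>pauli_labels N. \<Sum>r\<in>{0..<?n}. \<Sum>c\<in>{0..<?n}. \<Sum>r'\<in>{0..<?n}. \<Sum>c'\<in>{0..<?n}.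
           (?P p $$ (r, c) * cnj (?P p $$ (r', c'))) * (w r c * cnj (w r' c')))"
    unfolding e cnj_sum complex_cnj_mult sum_product_4 by (simp only: mult_ac)
  also have "\<dots> = (\<Sum>r\<in>{0..<?n}. \<Sum>c\<in>{0..<?n}. \<Sum>r'\<in>{0..<?n}. \<Sum>c'\<in>{0..<?n}.
           (\<Sum>p\<in>pauli_labels N. ?P p $$ (r, c) * cnj (?P p $$ (r', c'))) * (w r c * cnj (w r' c')))"
    by (simp only: sum.swap[of _ "pauli_labels N"] sum_distrib_right)
  also have "\<dots> = (\<Sum>r\<in>{0..<?n}. \<Sum>c\<in>{0..<?n}. \<Sum>r'\<in>{0..<?n}. \<Sum>c'\<in>{0..<?n}.
           (if r = r' \<and> c = c' then 2^N else 0) * (w r c * cnj (w r' c')))"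
    by (intro sum.cong refl) (simp add: sum_pauli_string_index_cnj)
  also have "\<dots> = (\<Sum>r\<in>{0..<?n}. \<Sum>c\<in>{0..<?n}. 2^N * (w r c * cnj (w r c)))"
    by (intro sum.cong refl sum_sum_delta[of _ ?n, where X = "\<lambda>r' c'. w r c * cnj (w r' c')" for r c])
      auto
  also have "\<dots> = 2^N * ((\<Sum>c\<in>{0..<?n}. \<phi> $ c * cnj (\<phi> $ c)) * (\<Sum>r\<in>{0..<?n}. \<phi> $ r * cnj (\<phi> $ r)))"
    by (simp add: w_def sum_distrib_left sum_product mult_ac)
  also have "\<dots> = 2^N * (\<phi> \<bullet>c \<phi>)^2"
    using \<phi> by (simp add: cscalar_prod_sum[of _ ?n] power2_eq_square)
  finally show ?thesis .
qed

lemma sum_cmod_expect_pauli_string: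
  assumes "is_state N \<phi>"
  shows "(\<Sum>p\<in>pauli_labels N. (cmod (expect (pauli_string N p) \<phi>))^2) = 2^N"
proof -
  have "complex_of_real (\<Sum>p\<in>pauli_labels N. (cmod (expect (pauli_string N p) \<phi>))^2)
      = (\<Sum>p\<in>pauli_labels N. expect (pauli_string N p) \<phi> * cnj (expect (pauli_string N p) \<phi>))"
    by (simp only: of_real_sum complex_norm_square)
  also have "\<dots> = complex_of_real (2^N)"
    using assms unfolding is_state_def by (simp add: sum_expect_pauli_string_cnj)
  finally show ?thesis by (simp only: of_real_eq_iff)
qed

section \<open>Stabilizer states\<close>

abbreviation phases :: "complex set" where
  "phases \<equiv> {1, -1, \<i>, -\<i>}"

text \<open>The Pauli label of an element c P of the Pauli group. In a stabilized state the phase c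
  is recovered from the expectation value of P, so the label determines the element.\<close>

definition pauli_label :: "nat \<Rightarrow> complex mat \<Rightarrow> nat \<Rightarrow> pauli1" where
  "pauli_label N M = restrict (SOME p. \<exists>c\<in>phases. M = c \<cdot>\<^sub>m pauli_string N p) {..<N}"

lemma pauli_label_in_pauli_labels: "pauli_label N M \<in> pauli_labels N"
  by (simp add: pauli_label_def)

lemma stab_group_elem_pauli_label:
  assumes M: "M \<in> stab_group N \<phi>" and st: "is_state N \<phi>"
  obtains c where "c \<in> phases" "M = c \<cdot>\<^sub>m pauli_string N (pauli_label N M)"
    "pauli_string N (pauli_label N M) *\<^sub>v \<phi> = (1 / c) \<cdot>\<^sub>v \<phi>"
    "expect (pauli_string N (pauli_label N M)) \<phi> = 1 / c"
proof -
  define q where "q = pauli_label N M"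
  have "\<exists>p. \<exists>c\<in>phases. M = c \<cdot>\<^sub>m pauli_string N p"
    using M unfolding stab_group_def pauli_group_def by blast
  from someI_ex[OF this] obtain c where c: "c \<in> phases"
    and "M = c \<cdot>\<^sub>m pauli_string N (SOME p. \<exists>c\<in>phases. M = c \<cdot>\<^sub>m pauli_string N p)"
    by blast
  then have Mc: "M = c \<cdot>\<^sub>m pauli_string N q"
    unfolding q_def pauli_label_def pauli_string_restrict by blast
  have \<phi>: "\<phi> \<in> carrier_vec (2^N)" using st unfolding is_state_def by blast
  have "M *\<^sub>v \<phi> = \<phi>" using M unfolding stab_group_def by blast
  then have "c \<cdot>\<^sub>v (pauli_string N q *\<^sub>v \<phi>) = \<phi>"
    unfolding Mc smult_mat_mult_vec[OF pauli_string_carrier \<phi>] .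
  then have "(1 / c) \<cdot>\<^sub>v (c \<cdot>\<^sub>v (pauli_string N q *\<^sub>v \<phi>)) = (1 / c) \<cdot>\<^sub>v \<phi>" by simp
  then have ev: "pauli_string N q *\<^sub>v \<phi> = (1 / c) \<cdot>\<^sub>v \<phi>"
    using c by (auto simp: smult_smult_assoc)
  show ?thesis
    using that[OF c] Mc ev expect_eigenvector[OF st pauli_string_carrier ev] unfolding q_def by blast
qed

lemma inj_on_pauli_label:
  assumes st: "is_state N \<phi>"
  shows "inj_on (pauli_label N) (stab_group N \<phi>)"
proof
  fix M M' assume M: "M \<in> stab_group N \<phi>" and M': "M' \<in> stab_group N \<phi>"
    and eq: "pauli_label N M = pauli_label N M'"
  obtain c where c: "M = c \<cdot>\<^sub>m pauli_string N (pauli_label N M)"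
    "expect (pauli_string N (pauli_label N M)) \<phi> = 1 / c"
    using stab_group_elem_pauli_label[OF M st] by blast
  obtain c' where c': "M' = c' \<cdot>\<^sub>m pauli_string N (pauli_label N M')"
    "expect (pauli_string N (pauli_label N M')) \<phi> = 1 / c'"
    using stab_group_elem_pauli_label[OF M' st] by blast
  have "c = c'" using c(2) c'(2) eq by simp
  then show "M = M'" using c(1) c'(1) eq by (metis (no_types))
qed

lemma card_stab_group_eq_sum:
  assumes st: "is_state N \<phi>"
  shows "real (card (stab_group N \<phi>))
       = (\<Sum>p\<in>pauli_label N ` stab_group N \<phi>. (cmod (expect (pauli_string N p) \<phi>))^2)"
proof -
  have "(cmod (expect (pauli_string N (pauli_label N M)) \<phi>))^2 = 1" if M: "M \<in> stab_group N \<phi>" for M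
  proof -
    obtain c where "c \<in> phases" "expect (pauli_string N (pauli_label N M)) \<phi> = 1 / c"
      using stab_group_elem_pauli_label[OF M st] by blast
    then show ?thesis by (auto simp: norm_divide)
  qed
  then show ?thesis by (simp add: sum.reindex[OF inj_on_pauli_label[OF st]])
qed

lemma card_stab_group_le:
  assumes st: "is_state N \<phi>"
  shows "card (stab_group N \<phi>) \<le> 2^N"
proof -
  have "real (card (stab_group N \<phi>))
      \<le> (\<Sum>p\<in>pauli_labels N. (cmod (expect (pauli_string N p) \<phi>))^2)"
    unfolding card_stab_group_eq_sum[OF st]
    by (intro sum_mono2 finite_pauli_labels image_subsetI pauli_label_in_pauli_labels zero_le_power2)
  then show ?thesis
    unfolding sum_cmod_expect_pauli_string[OF st] by (metis of_nat_le_iff of_nat_numeral of_nat_power)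
qed

lemma stabilizer_stateI:
  assumes st: "is_state N \<phi>" and D: "D \<subseteq> pauli_labels N" and card_D: "card D = 2^N"
    and fix_\<phi>: "\<And>p. p \<in> D \<Longrightarrow> pauli_string N p *\<^sub>v \<phi> = \<phi>"
  shows "stabilizer_state N \<phi>"
proof -
  have sub: "pauli_string N ` D \<subseteq> stab_group N \<phi>"
    using fix_\<phi> pauli_string_in_pauli_group unfolding stab_group_def by blast
  have "finite (pauli_label N ` stab_group N \<phi>)"
    by (intro finite_subset[OF _ finite_pauli_labels[of N]] image_subsetI pauli_label_in_pauli_labels)
  then have fin: "finite (stab_group N \<phi>)"
    by (rule finite_imageD[OF _ inj_on_pauli_label[OF st]])
  have "card (pauli_string N ` D) = 2^N"
    using card_image[OF inj_on_subset[OF inj_on_pauli_string D]] card_D by simp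
  then have "2^N \<le> card (stab_group N \<phi>)" using card_mono[OF fin sub] by simp
  then show ?thesis using card_stab_group_le[OF st] st unfolding stabilizer_state_def by simp
qed

lemma stabilizer_state_expect_zero:
  assumes st: "stabilizer_state N \<phi>" and p: "p \<in> pauli_labels N"
    and not_stab: "p \<notin> pauli_label N ` stab_group N \<phi>"
  shows "expect (pauli_string N p) \<phi> = 0"
proof -
  let ?T = "pauli_label N ` stab_group N \<phi>"
  let ?f = "\<lambda>p. (cmod (expect (pauli_string N p) \<phi>))^2"
  have st': "is_state N \<phi>" and card: "card (stab_group N \<phi>) = 2^N"
    using st unfolding stabilizer_state_def by blast+
  have T: "?T \<subseteq> pauli_labels N" by (intro image_subsetI pauli_label_in_pauli_labels)
  have "sum ?f (pauli_labels N - ?T) = sum ?f (pauli_labels N) - sum ?f ?T"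
    by (rule sum_diff[OF finite_pauli_labels T])
  also have "\<dots> = 0"
    using sum_cmod_expect_pauli_string[OF st'] card_stab_group_eq_sum[OF st'] card by simp
  finally have "?f p = 0"
    using p not_stab by (subst (asm) sum_nonneg_eq_0_iff) auto
  then show ?thesis by simp
qed

lemma stabilizer_state_expect_pauli_string:
  assumes st: "stabilizer_state N \<phi>"
  obtains "expect (pauli_string N p) \<phi> = 0"
  | l where "l \<in> {1, -1}" "pauli_string N p *\<^sub>v \<phi> = l \<cdot>\<^sub>v \<phi>" "expect (pauli_string N p) \<phi> = l"
proof -
  have st': "is_state N \<phi>" using st unfolding stabilizer_state_def by blast
  let ?q = "restrict p {..<N}"
  show ?thesis
  proof (cases "?q \<in> pauli_label N ` stab_group N \<phi>")
    case True
    then obtain M where M: "M \<in> stab_group N \<phi>" and qM: "?q = pauli_label N M" by auto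
    obtain c where c: "c \<in> phases" "pauli_string N ?q *\<^sub>v \<phi> = (1 / c) \<cdot>\<^sub>v \<phi>"
      "expect (pauli_string N ?q) \<phi> = 1 / c"
      using stab_group_elem_pauli_label[OF M st'] unfolding qM by blast
    have "cnj (1 / c) = 1 / c"
      by (rule pauli_string_eigenvalue_real[OF st' c(2)])
    then have "1 / c \<in> {1, -1}"
      using c(1) by (elim insertE emptyE; hypsubst; simp add: complex_eq_iff)
    then show ?thesis using that(2) c unfolding pauli_string_restrict by blast
  next
    case False
    then show ?thesis
      using that(1) stabilizer_state_expect_zero[OF st, of ?q] unfolding pauli_string_restrict by auto
  qed
qed

lemma stabilizer_state_Re_expect_le_1:
  "stabilizer_state N \<phi> \<Longrightarrow> Re (expect (pauli_string N p) \<phi>) \<le> 1"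
  by (rule stabilizer_state_expect_pauli_string[of N \<phi> p]) auto

definition X_at :: "nat \<Rightarrow> nat \<Rightarrow> pauli1" where
  "X_at i = (\<lambda>k. if k \<in> {i} then PX else PI)"

definition Z_on :: "nat set \<Rightarrow> nat \<Rightarrow> pauli1" where
  "Z_on e = (\<lambda>k. if k \<in> e then PZ else PI)"

lemma pauli_on_X: "pauli_on N {i} PX = pauli_string N (X_at i)"
  by (simp add: pauli_on_def X_at_def)

lemma pauli_on_Z: "pauli_on N e PZ = pauli_string N (Z_on e)"
  by (simp add: pauli_on_def Z_on_def)

lemma Z_on_X_at_anticommute:
  assumes "i < N" "i \<in> e"
  defines "W \<equiv> pauli_string N (\<lambda>k. pauli1_mult (X_at i k) (Z_on e k))"
  shows "pauli_string N (Z_on e) * pauli_string N (X_at i) = \<i> \<cdot>\<^sub>m W"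
    and "pauli_string N (X_at i) * pauli_string N (Z_on e) = - \<i> \<cdot>\<^sub>m W"
proof -
  have "pauli1_phase (Z_on e k) (X_at i k) = (if k = i then \<i> else 1)"
    and "pauli1_phase (X_at i k) (Z_on e k) = (if k = i then - \<i> else 1)"
    and "pauli1_mult (Z_on e k) (X_at i k) = pauli1_mult (X_at i k) (Z_on e k)" for k
    using assms(2) by (auto simp: Z_on_def X_at_def)
  then show "pauli_string N (Z_on e) * pauli_string N (X_at i) = \<i> \<cdot>\<^sub>m W"
    and "pauli_string N (X_at i) * pauli_string N (Z_on e) = - \<i> \<cdot>\<^sub>m W"
    using assms(1) by (simp_all add: W_def pauli_string_mult)
qed

text \<open>
  Write z and w for the expectations of Z_e and of the product W in the anticommutation relation.
  If X_i phi = l phi, then moving X_i to the right gives l z = i w, while moving it to the left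
  (X_i is hermitian and l real) gives l z = -i w; hence l z = 0.
\<close>

lemma expect_Z_on_eq_0:
  assumes st: "is_state N \<phi>" and i: "i < N" "i \<in> e"
    and ev: "pauli_string N (X_at i) *\<^sub>v \<phi> = l \<cdot>\<^sub>v \<phi>" and l_nonzero: "l \<noteq> 0"
  shows "expect (pauli_string N (Z_on e)) \<phi> = 0"
proof -
  have \<phi>: "\<phi> \<in> carrier_vec (2^N)" using st unfolding is_state_def by blast
  let ?X = "pauli_string N (X_at i)" and ?Z = "pauli_string N (Z_on e)"
    and ?W = "pauli_string N (\<lambda>k. pauli1_mult (X_at i k) (Z_on e k))"
  define z where "z = (?Z *\<^sub>v \<phi>) \<bullet>c \<phi>"
  define w where "w = (?W *\<^sub>v \<phi>) \<bullet>c \<phi>"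
  have Z\<phi>: "?Z *\<^sub>v \<phi> \<in> carrier_vec (2^N)" and W\<phi>: "?W *\<^sub>v \<phi> \<in> carrier_vec (2^N)"
    using \<phi> by (simp_all add: mult_mat_vec_carrier[OF pauli_string_carrier])
  have "l * z = (?Z *\<^sub>v (?X *\<^sub>v \<phi>)) \<bullet>c \<phi>"
    unfolding z_def ev using \<phi> Z\<phi>
    by (simp add: mult_mat_vec[OF pauli_string_carrier] cscalar_prod_smult_left[of _ "2^N"])
  also have "\<dots> = ((?Z * ?X) *\<^sub>v \<phi>) \<bullet>c \<phi>"
    using \<phi> by (simp add: assoc_mult_mat_vec[OF pauli_string_carrier pauli_string_carrier \<phi>])
  also have "\<dots> = \<i> * w"
    unfolding Z_on_X_at_anticommute(1)[OF i] w_def using \<phi> W\<phi>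
    by (simp add: smult_mat_mult_vec[OF pauli_string_carrier \<phi>] cscalar_prod_smult_left[of _ "2^N"])
  finally have pos: "l * z = \<i> * w" .
  have "l * z = cnj l * z" using pauli_string_eigenvalue_real[OF st ev] by simp
  also have "\<dots> = (?Z *\<^sub>v \<phi>) \<bullet>c (?X *\<^sub>v \<phi>)"
    unfolding z_def ev using Z\<phi> \<phi> by (simp add: cscalar_prod_smult_right[of _ "2^N"])
  also have "\<dots> = (?X *\<^sub>v (?Z *\<^sub>v \<phi>)) \<bullet>c \<phi>"
    by (rule pauli_string_cscalar_prod_swap[OF Z\<phi> \<phi>, symmetric])
  also have "\<dots> = ((?X * ?Z) *\<^sub>v \<phi>) \<bullet>c \<phi>"
    using \<phi> by (simp add: assoc_mult_mat_vec[OF pauli_string_carrier pauli_string_carrier \<phi>])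
  also have "\<dots> = - \<i> * w"
    unfolding Z_on_X_at_anticommute(2)[OF i] w_def using \<phi> W\<phi>
    by (simp add: smult_mat_mult_vec[OF pauli_string_carrier \<phi>] cscalar_prod_smult_left[of _ "2^N"])
  finally have "l * z = - \<i> * w" .
  with pos have "l * z = 0" by (simp add: complex_eq_iff)
  then show ?thesis using l_nonzero unfolding z_def expect_def by simp
qed

lemma sum_sum_sum_swap:
  "(\<Sum>r\<in>A. \<Sum>c\<in>B. \<Sum>e\<in>C. f e r c) = (\<Sum>e\<in>C. \<Sum>r\<in>A. \<Sum>c\<in>B. f e r c)"
  by (simp only: sum.swap[of _ C])

lemma ising_H_carrier: "ising_H N E g \<in> carrier_mat (2^N) (2^N)"
  by (simp add: ising_H_def)

lemma expect_ising_H: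
  assumes \<phi>: "\<phi> \<in> carrier_vec (2^N)"
  shows "expect (ising_H N E g) \<phi>
       = - (\<Sum>e\<in>E. expect (pauli_string N (Z_on e)) \<phi>)
         - complex_of_real g * (\<Sum>i<N. expect (pauli_string N (X_at i)) \<phi>)"
proof -
  let ?n = "(2::nat)^N"
  define w where "w r c = \<phi> $ c * cnj (\<phi> $ r)" for r c
  have "expect (ising_H N E g) \<phi>
      = (\<Sum>r\<in>{0..<?n}. \<Sum>c\<in>{0..<?n}. ising_H N E g $$ (r, c) * w r c)"
    unfolding w_def by (rule expect_double_sum[OF ising_H_carrier \<phi>])
  also have "\<dots> = (\<Sum>r\<in>{0..<?n}. \<Sum>c\<in>{0..<?n}. - (\<Sum>e\<in>E. pauli_string N (Z_on e) $$ (r, c) * w r c)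
           - complex_of_real g * (\<Sum>i<N. pauli_string N (X_at i) $$ (r, c) * w r c))"
    by (intro sum.cong refl)
      (simp add: ising_H_def pauli_on_X pauli_on_Z left_diff_distrib sum_distrib_right mult.assoc)
  also have "\<dots> = - (\<Sum>e\<in>E. \<Sum>r\<in>{0..<?n}. \<Sum>c\<in>{0..<?n}. pauli_string N (Z_on e) $$ (r, c) * w r c)
           - complex_of_real g * (\<Sum>i<N. \<Sum>r\<in>{0..<?n}. \<Sum>c\<in>{0..<?n}. pauli_string N (X_at i) $$ (r, c) * w r c)"
    by (simp add: sum_subtractf sum_negf sum_distrib_left sum_sum_sum_swap[where C = E]
        sum_sum_sum_swap[where C = "{..<N}"])
  finally show ?thesis
    unfolding w_def using \<phi> by (simp add: expect_double_sum[OF pauli_string_carrier])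
qed

lemma finite_edge_counts: "finite {card (edges_in E S) | S. S \<subseteq> {0..<N} \<and> card S \<le> n}"
proof -
  have "{card (edges_in E S) | S. S \<subseteq> {0..<N} \<and> card S \<le> n}
      \<subseteq> (\<lambda>S. card (edges_in E S)) ` Pow {0..<N}"
    by auto
  then show ?thesis by (rule finite_subset) simp
qed

lemma card_edges_in_le_edge_fun:
  "S \<subseteq> {0..<N} \<Longrightarrow> card S \<le> n \<Longrightarrow> card (edges_in E S) \<le> edge_fun N E n"
  unfolding edge_fun_def by (rule Max_ge[OF finite_edge_counts]) blast

lemma edge_fun_le:
  assumes "\<And>S. S \<subseteq> {0..<N} \<Longrightarrow> card S \<le> n \<Longrightarrow> card (edges_in E S) \<le> m"
  shows "edge_fun N E n \<le> m"
  unfolding edge_fun_def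
proof (rule Max.boundedI[OF finite_edge_counts])
  show "{card (edges_in E S) |S. S \<subseteq> {0..<N} \<and> card S \<le> n} \<noteq> {}" by force
qed (use assms in blast)

lemma simple_graph_finite: "simple_graph N E \<Longrightarrow> finite E"
  by (rule finite_subset[of _ "Pow {0..<N}"]) (auto simp: simple_graph_def)

lemma edge_fun_N:
  assumes G: "simple_graph N E"
  shows "edge_fun N E N = card E"
proof (rule antisym)
  show "edge_fun N E N \<le> card E"
    by (rule edge_fun_le) (auto simp: edges_in_def intro: card_mono simple_graph_finite[OF G])
  have "edges_in E {0..<N} = E" using G unfolding edges_in_def simple_graph_def by blast
  then show "card E \<le> edge_fun N E N"
    using card_edges_in_le_edge_fun[of "{0..<N}" N N E] by simp
qed

lemma edge_fun_0:
  assumes G: "simple_graph N E"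
  shows "edge_fun N E 0 = 0"
proof -
  have "edges_in E S = {}" if "S \<subseteq> {0..<N}" "card S \<le> 0" for S
  proof -
    have "S = {}" using that finite_subset[OF that(1)] by auto
    then show ?thesis using G by (auto simp: edges_in_def simple_graph_def)
  qed
  then have "edge_fun N E 0 \<le> 0" by (intro edge_fun_le) simp
  then show ?thesis by simp
qed

lemma card_edges_avoiding_le_edge_fun:
  assumes G: "simple_graph N E" and A: "A \<subseteq> {..<N}"
  shows "card (E \<inter> {e. e \<inter> A = {}}) \<le> edge_fun N E (N - card A)"
proof -
  have "E \<inter> {e. e \<inter> A = {}} = edges_in E ({0..<N} - A)"
    using G unfolding edges_in_def simple_graph_def by blast
  moreover have "card ({0..<N} - A) = N - card A"
    using A by (simp add: card_Diff_subset finite_subset lessThan_atLeast0)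
  ultimately show ?thesis by (simp add: card_edges_in_le_edge_fun)
qed

section \<open>Lower bound on stabilizer energies\<close>

lemma sum_le_card_support:
  fixes f :: "'a \<Rightarrow> real"
  assumes "finite I" "\<And>i. i \<in> I \<Longrightarrow> f i \<le> 1" "\<And>i. i \<in> I \<Longrightarrow> i \<notin> S \<Longrightarrow> f i \<le> 0"
  shows "sum f I \<le> card (I \<inter> S)"
proof -
  have "sum f I = sum f (I \<inter> S) + sum f (I - S)"
    using assms(1) by (rule sum.Int_Diff)
  also have "\<dots> \<le> real (card (I \<inter> S)) + 0"
  proof (rule add_mono)
    show "sum f (I \<inter> S) \<le> card (I \<inter> S)"
      using sum_bounded_above[of "I \<inter> S" f 1] assms(2) by auto
    show "sum f (I - S) \<le> 0"
      using assms(3) by (intro sum_nonpos) auto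
  qed
  finally show ?thesis by simp
qed

lemma stabilizer_energy_lower_bound:
  assumes st: "stabilizer_state N \<phi>" and G: "simple_graph N E" and g: "g \<ge> 0"
  obtains k where "k \<le> N"
    "- real (edge_fun N E (N - k)) - g * real k \<le> Re (expect (ising_H N E g) \<phi>)"
proof -
  have st': "is_state N \<phi>" and \<phi>: "\<phi> \<in> carrier_vec (2^N)"
    using st unfolding stabilizer_state_def is_state_def by blast+
  define x where "x i = expect (pauli_string N (X_at i)) \<phi>" for i
  define z where "z e = expect (pauli_string N (Z_on e)) \<phi>" for e
  define A where "A = {..<N} \<inter> {i. x i \<noteq> 0}"
  have A: "A \<subseteq> {..<N}" unfolding A_def by blast
  have sum_x: "(\<Sum>i<N. Re (x i)) \<le> card A"
    unfolding A_def
    by (rule sum_le_card_support) (auto simp: x_def stabilizer_state_Re_expect_le_1[OF st])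
  have z_0: "z e = 0" if "e \<in> E" "i \<in> e" "i \<in> A" for e i
  proof -
    obtain l where "l \<in> {1, -1}" "pauli_string N (X_at i) *\<^sub>v \<phi> = l \<cdot>\<^sub>v \<phi>"
      using stabilizer_state_expect_pauli_string[OF st, of "X_at i"] \<open>i \<in> A\<close>
      unfolding A_def x_def by auto
    then show ?thesis
      unfolding z_def using that A by (intro expect_Z_on_eq_0[OF st']) auto
  qed
  have "(\<Sum>e\<in>E. Re (z e)) \<le> card (E \<inter> {e. e \<inter> A = {}})"
    using z_0 by (intro sum_le_card_support[OF simple_graph_finite[OF G]])
      (auto simp: z_def stabilizer_state_Re_expect_le_1[OF st])
  also have "\<dots> \<le> edge_fun N E (N - card A)"
    using card_edges_avoiding_le_edge_fun[OF G A] by simp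
  finally have sum_z: "(\<Sum>e\<in>E. Re (z e)) \<le> edge_fun N E (N - card A)" by simp
  have "Re (expect (ising_H N E g) \<phi>) = - (\<Sum>e\<in>E. Re (z e)) - g * (\<Sum>i<N. Re (x i))"
    unfolding expect_ising_H[OF \<phi>] x_def z_def by (simp add: Re_sum)
  also have "\<dots> \<ge> - real (edge_fun N E (N - card A)) - g * real (card A)"
    using sum_z mult_left_mono[OF sum_x g] by linarith
  finally show ?thesis
    using that card_mono[OF _ A] by (metis card_lessThan finite_lessThan)
qed

section \<open>Two product stabilizer states\<close>

abbreviation zero_state :: "nat \<Rightarrow> complex vec" where
  "zero_state N \<equiv> unit_vec (2^N) 0"

definition plus_state :: "nat \<Rightarrow> complex vec" where
  "plus_state N = vec (2^N) (\<lambda>_. complex_of_real (1 / sqrt (2^N)))"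

lemma plus_state_index: "c < 2^N \<Longrightarrow> plus_state N $ c = complex_of_real (1 / sqrt (2^N))"
  by (simp add: plus_state_def)

lemma pauli1_entry_col_0: "P \<in> {PI, PZ} \<Longrightarrow> pauli1_entry P a 0 = (if a = 0 then 1 else 0)"
  by auto

lemma pauli1_entry_row_sum: "P \<in> {PI, PX} \<Longrightarrow> a < 2 \<Longrightarrow> pauli1_entry P a 0 + pauli1_entry P a 1 = 1"
  using less_2_cases[of a] by auto

lemma conjugate_zero_state: "conjugate (zero_state N) = zero_state N"
  by (rule eq_vecI) auto

lemma zero_state_is_state: "is_state N (zero_state N)"
  unfolding is_state_def conjugate_zero_state by simp

lemma expect_zero_state:
  assumes "A \<in> carrier_mat (2^N) (2^N)"
  shows "expect A (zero_state N) = A $$ (0, 0)"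
  using assms unfolding expect_def conjugate_zero_state by (simp add: row_def)

lemma pauli_string_fixes_zero_state:
  assumes p: "\<And>i. i < N \<Longrightarrow> p i \<in> {PI, PZ}"
  shows "pauli_string N p *\<^sub>v zero_state N = zero_state N"
proof (rule eq_vecI)
  fix r assume "r < dim_vec (zero_state N)"
  then have r: "r < 2^N" by simp
  have "(pauli_string N p *\<^sub>v zero_state N) $ r = (\<Prod>i<N. pauli1_entry (p i) (qbit r i) 0)"
    using r by (simp add: row_def pauli_string_index)
  also have "\<dots> = (\<Prod>i<N. if qbit r i = 0 then 1 else 0)"
    by (intro prod.cong refl pauli1_entry_col_0 p) simp
  also have "\<dots> = zero_state N $ r"
  proof -
    have "(\<forall>i<N. qbit r i = 0) \<longleftrightarrow> r = 0" using eq_if_qbits_eq[of r N 0] r by auto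
    then show ?thesis using r by (auto simp: prod_zero_iff)
  qed
  finally show "(pauli_string N p *\<^sub>v zero_state N) $ r = zero_state N $ r" .
qed simp

lemma zero_state_stabilizer_state: "stabilizer_state N (zero_state N)"
proof (rule stabilizer_stateI[OF zero_state_is_state, of "{..<N} \<rightarrow>\<^sub>E {PI, PZ}"])
  show "card ({..<N} \<rightarrow>\<^sub>E {PI, PZ}) = 2^N" by (simp add: card_PiE numeral_2_eq_2)
qed (auto intro: pauli_string_fixes_zero_state)

lemma expect_ising_H_zero_state:
  "expect (ising_H N E g) (zero_state N) = - of_nat (card E)"
proof -
  have "pauli1_entry (Z_on e k) 0 0 = 1" for e k
    by (simp add: Z_on_def)
  then have "expect (pauli_string N (Z_on e)) (zero_state N) = 1" for e
    by (simp add: expect_zero_state pauli_string_index)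
  moreover have "expect (pauli_string N (X_at i)) (zero_state N) = 0" if "i < N" for i
    using that by (simp add: expect_zero_state pauli_string_index X_at_def prod_zero_iff)
  ultimately show ?thesis by (simp add: expect_ising_H)
qed

lemma plus_state_carrier: "plus_state N \<in> carrier_vec (2^N)"
  by (simp add: plus_state_def)

lemma plus_state_index_mult_cnj:
  "r < 2^N \<Longrightarrow> c < 2^N \<Longrightarrow> plus_state N $ c * cnj (plus_state N $ r) = 1 / 2^N"
  by (simp add: plus_state_def power_divide flip: of_real_mult)

lemma plus_state_is_state: "is_state N (plus_state N)"
  unfolding is_state_def using plus_state_carrier
  by (simp add: cscalar_prod_sum[OF plus_state_carrier plus_state_carrier] plus_state_index_mult_cnj)

lemma expect_plus_state:
  assumes "A \<in> carrier_mat (2^N) (2^N)"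
  shows "expect A (plus_state N) = (\<Sum>r\<in>{0..<2^N}. \<Sum>c\<in>{0..<2^N}. A $$ (r, c)) / 2^N"
  using assms plus_state_carrier
  by (simp add: expect_double_sum plus_state_index_mult_cnj sum_divide_distrib)

lemma pauli_string_fixes_plus_state:
  assumes p: "\<And>i. i < N \<Longrightarrow> p i \<in> {PI, PX}"
  shows "pauli_string N p *\<^sub>v plus_state N = plus_state N"
proof (rule eq_vecI)
  fix r assume "r < dim_vec (plus_state N)"
  then have r: "r < 2^N" by (simp add: plus_state_def)
  let ?s = "complex_of_real (1 / sqrt (2^N))"
  have "(pauli_string N p *\<^sub>v plus_state N) $ r
      = (\<Sum>c\<in>{0..<2^N}. pauli_string N p $$ (r, c) * plus_state N $ c)"
    by (rule mult_mat_vec_index_sum[OF pauli_string_carrier plus_state_carrier r])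
  also have "\<dots> = (\<Sum>c\<in>{0..<2^N}. \<Prod>i<N. pauli1_entry (p i) (qbit r i) (qbit c i)) * ?s"
    using r by (simp add: plus_state_index pauli_string_index sum_distrib_right sum_divide_distrib)
  also have "\<dots> = (\<Prod>i<N. pauli1_entry (p i) (qbit r i) 0 + pauli1_entry (p i) (qbit r i) 1) * ?s"
    by (simp only: sum_prod_qbits[of "\<lambda>i b. pauli1_entry (p i) (qbit r i) b"])
  also have "(\<Prod>i<N. pauli1_entry (p i) (qbit r i) 0 + pauli1_entry (p i) (qbit r i) 1) = 1"
    by (intro prod.neutral ballI pauli1_entry_row_sum qbit_less_2 p) simp
  finally show "(pauli_string N p *\<^sub>v plus_state N) $ r = plus_state N $ r"
    using r by (simp add: plus_state_index)
qed (simp add: plus_state_def)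

lemma plus_state_stabilizer_state: "stabilizer_state N (plus_state N)"
proof (rule stabilizer_stateI[OF plus_state_is_state, of "{..<N} \<rightarrow>\<^sub>E {PI, PX}"])
  show "card ({..<N} \<rightarrow>\<^sub>E {PI, PX}) = 2^N" by (simp add: card_PiE numeral_2_eq_2)
qed (auto intro: pauli_string_fixes_plus_state)

lemma expect_ising_H_plus_state:
  assumes G: "simple_graph N E"
  shows "expect (ising_H N E g) (plus_state N) = - complex_of_real g * of_nat N"
proof -
  have sum_entries: "(\<Sum>r\<in>{0..<2^N}. \<Sum>c\<in>{0..<2^N}. pauli_string N p $$ (r, c))
      = (\<Prod>k<N. pauli1_entry (p k) 0 0 + pauli1_entry (p k) 0 1
                 + (pauli1_entry (p k) 1 0 + pauli1_entry (p k) 1 1))" for p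
  proof -
    have "(\<Sum>r\<in>{0..<2^N}. \<Sum>c\<in>{0..<2^N}. pauli_string N p $$ (r, c))
        = (\<Sum>r\<in>{0..<2^N}. \<Sum>c\<in>{0..<2^N}. \<Prod>k<N. pauli1_entry (p k) (qbit r k) (qbit c k))"
      by (intro sum.cong refl) (simp add: pauli_string_index)
    then show ?thesis using sum_sum_prod_qbits[of "\<lambda>k a b. pauli1_entry (p k) a b" N] by simp
  qed
  have "pauli1_entry (X_at i k) 0 0 + pauli1_entry (X_at i k) 0 1
        + (pauli1_entry (X_at i k) 1 0 + pauli1_entry (X_at i k) 1 1) = 2" for i k
    by (simp add: X_at_def)
  then have "expect (pauli_string N (X_at i)) (plus_state N) = 1" for i
    by (simp add: expect_plus_state sum_entries)
  moreover have "expect (pauli_string N (Z_on e)) (plus_state N) = 0" if "e \<in> E" for e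
  proof -
    obtain j where j: "j \<in> e" "j < N" using G \<open>e \<in> E\<close> unfolding simple_graph_def
      by (metis atLeastLessThan_iff card.empty ex_in_conv subsetD zero_neq_numeral)
    have "pauli1_entry (Z_on e j) 0 0 + pauli1_entry (Z_on e j) 0 1
          + (pauli1_entry (Z_on e j) 1 0 + pauli1_entry (Z_on e j) 1 1) = 0"
      using j by (simp add: Z_on_def)
    then show ?thesis using j by (simp add: expect_plus_state sum_entries prod_zero_iff) blast
  qed
  ultimately show ?thesis by (simp add: expect_ising_H[OF plus_state_carrier])
qed

lemma min_slope_eq_density:
  fixes F :: "nat \<Rightarrow> real"
  assumes "N > 0" "F 0 = 0" "\<And>n. 0 < n \<Longrightarrow> n < N \<Longrightarrow> F n / n \<le> F N / N"
  shows "Min ((\<lambda>n. (F N - F n) / (real N - real n)) ` {0..<N}) = F N / N"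
proof (rule Min_eqI)
  fix y assume "y \<in> (\<lambda>n. (F N - F n) / (real N - real n)) ` {0..<N}"
  then obtain n where n: "n < N" and y: "y = (F N - F n) / (real N - real n)" by auto
  show "F N / N \<le> y"
  proof (cases "n = 0")
    case False
    have "F n \<le> n * (F N / N)"
      using assms(3)[of n] False n by (simp add: pos_divide_le_eq mult.commute)
    moreover have "F N / N * (real N - real n) = F N - n * (F N / N)"
      using assms(1) by (simp add: field_simps)
    ultimately have "F N / N * (real N - real n) \<le> F N - F n" by linarith
    then show ?thesis unfolding y using n by (simp add: pos_le_divide_eq)
  qed (use y assms(2) in simp)
qed (use assms in \<open>auto intro!: image_eqI[where x = 0]\<close>)

text \<open>
  In terms of k = N - n, the density hypothesis says that \<E>(N - k) \<le> (N - k) \<E>(N) / N;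
  the bound is then linear in k and minimised at k = 0 or k = N.
\<close>

lemma ising_min_le_energy_bound:
  fixes g :: real and F :: "nat \<Rightarrow> real"
  assumes "N > 0" "k \<le> N" "g \<ge> 0" "F 0 = 0"
    and dens: "\<And>n. 0 < n \<Longrightarrow> n < N \<Longrightarrow> F n / n \<le> F N / N"
  shows "(if g \<le> F N / N then - F N else - g * N) \<le> - F (N - k) - g * k"
proof -
  define a where "a = F N / N"
  have aN: "F N = a * N" using assms(1) by (simp add: a_def)
  have Fk: "F (N - k) \<le> (real N - real k) * a"
  proof (cases "0 < k \<and> k < N")
    case True
    then show ?thesis
      using dens[of "N - k"] by (simp add: a_def pos_divide_le_eq of_nat_diff mult.commute)
  next
    case False
    then consider "k = 0" | "k = N" using assms(2) by linarith
    then show ?thesis by cases (simp_all add: aN assms(4))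
  qed
  show ?thesis
  proof (cases "g \<le> a")
    case True
    then have "g * k \<le> a * k" by (simp add: mult_right_mono)
    then have "F (N - k) + g * k \<le> F N" using Fk aN by (simp add: algebra_simps)
    then show ?thesis using True unfolding a_def by simp
  next
    case False
    then have "(real N - real k) * a \<le> (real N - real k) * g"
      using assms(2) by (intro mult_left_mono) auto
    then have "F (N - k) \<le> (real N - real k) * g" using Fk by simp
    then show ?thesis using False unfolding a_def by (simp add: algebra_simps)
  qed
qed

theorem mainTheorem8:
  fixes N :: nat and E :: "nat set set" and g :: real
  assumes graph: "simple_graph N E"
    and N_pos: "N > 0"
    and dens: "\<forall>n. 0 < n \<and> n < N \<longrightarrow>
                 real (edge_fun N E N) / real N \<ge> real (edge_fun N E n) / real n"
    and g_nonneg: "g \<ge> 0"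
  shows "Min ((\<lambda>n. (real (edge_fun N E N) - real (edge_fun N E n)) / (real N - real n)) ` {0..<N})
           = real (edge_fun N E N) / real N
         \<and> (let m = (if g \<le> real (edge_fun N E N) / real N
                  then - real (edge_fun N E N) else - g * real N)
         in (\<exists>\<phi>. stabilizer_state N \<phi> \<and> Re (expect (ising_H N E g) \<phi>) = m)
          \<and> (\<forall>\<phi>. stabilizer_state N \<phi> \<longrightarrow> m \<le> Re (expect (ising_H N E g) \<phi>)))"
proof -
  let ?F = "\<lambda>n. real (edge_fun N E n)"
  define m where "m = (if g \<le> ?F N / N then - ?F N else - g * N)"
  have F0: "?F 0 = 0" using edge_fun_0[OF graph] by simp
  have dens': "?F n / n \<le> ?F N / N" if "0 < n" "n < N" for n
    using dens that by blast
  have "stabilizer_state N \<phi> \<and> Re (expect (ising_H N E g) \<phi>) = m"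
    if "\<phi> = (if g \<le> ?F N / N then zero_state N else plus_state N)" for \<phi>
    using that zero_state_stabilizer_state plus_state_stabilizer_state
    by (simp add: m_def edge_fun_N[OF graph] expect_ising_H_zero_state expect_ising_H_plus_state[OF graph])
  moreover have "m \<le> Re (expect (ising_H N E g) \<phi>)" if st: "stabilizer_state N \<phi>" for \<phi>
  proof -
    obtain k where "k \<le> N" and "- ?F (N - k) - g * k \<le> Re (expect (ising_H N E g) \<phi>)"
      using stabilizer_energy_lower_bound[OF st graph g_nonneg] .
    then show ?thesis
      using ising_min_le_energy_bound[OF N_pos _ g_nonneg F0 dens'] unfolding m_def by fastforce
  qed
  ultimately show ?thesis
    using min_slope_eq_density[of N ?F, OF N_pos F0 dens'] unfolding Let_def m_def by blast
qed

end
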